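(* Let $0<c<1$ and $0<d<1$ be irrational numbers, and let $f(n)=[c(n+1)]-[cn]$ and $g(n)=[d(n+1)]-[dn]$. Then for every real $t\ge0$, $$\sum_{n\le t} f(n)\,g([cn]+1)=[d([c([t]+1)]+1)],$$ where the sum is over positive integers $n\le t$.
   Context: $[x]$ is the greatest integer not exceeding $x$. Note $f$ is the indicator of $\{[j/c]:j\ge1\}$ and $g$ the indicator of $\{[j/d]:j\ge1\}$. *)

theory Defs
  imports Complex_Main
begin

end

theory Submission
  imports Defs
begin

text \<open>Since \<open>f n \<in> {0, 1}\<close> and \<open>f n = 1\<close> exactly when \<open>\<lfloor>c (n + 1)\<rfloor> = \<lfloor>c n\<rfloor> + 1\<close>, each summand
  \<open>f n \<cdot> g (\<lfloor>c n\<rfloor> + 1)\<close> equals \<open>F \<lfloor>c (n + 1)\<rfloor> - F \<lfloor>c n\<rfloor>\<close> for \<open>F m = \<lfloor>d (m + 1)\<rfloor>\<close>.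
  The sum therefore telescopes to \<open>F \<lfloor>c (\<lfloor>t\<rfloor> + 1)\<rfloor> - F \<lfloor>c\<rfloor>\<close>, and \<open>F \<lfloor>c\<rfloor> = \<lfloor>d\<rfloor> = 0\<close>.\<close>

lemma floor_mult_add_one_cases:
  fixes c x :: real
  assumes "0 \<le> c" "c \<le> 1"
  shows "\<lfloor>c * (x + 1)\<rfloor> = \<lfloor>c * x\<rfloor> \<or> \<lfloor>c * (x + 1)\<rfloor> = \<lfloor>c * x\<rfloor> + 1"
proof -
  have "\<lfloor>c * x\<rfloor> \<le> \<lfloor>c * (x + 1)\<rfloor>"
    using assms by (intro floor_mono) (simp add: algebra_simps)
  moreover have "\<lfloor>c * (x + 1)\<rfloor> \<le> \<lfloor>c * x + 1\<rfloor>"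
    using assms by (intro floor_mono) (simp add: algebra_simps)
  ultimately show ?thesis by linarith
qed

lemma unit_step_mult_diff:
  fixes h F :: "int \<Rightarrow> int"
  assumes "h (n + 1) = h n \<or> h (n + 1) = h n + 1"
  shows "(h (n + 1) - h n) * (F (h n + 1) - F (h n)) = F (h (n + 1)) - F (h n)"
  using assms by auto

lemma sum_int_atLeastAtMost_telescope:
  fixes F :: "int \<Rightarrow> 'a :: ab_group_add"
  assumes "0 \<le> N"
  shows "(\<Sum>n\<in>{1..N}. F (n + 1) - F n) = F (N + 1) - F 1"
  using assms
proof (induction rule: int_ge_induct)
  case base
  show ?case by simp
next
  case (step N)
  have "{1..N + 1} = insert (N + 1) {1..N}" using step.hyps by auto
  with step.IH show ?case by simp
qed

theorem lemma7:
  fixes c d t :: real and f g :: "int \<Rightarrow> int"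
  assumes "0 < c" "c < 1" "0 < d" "d < 1"
    and "c \<notin> \<rat>" "d \<notin> \<rat>"
    and "\<And>n. f n = \<lfloor>c * (of_int n + 1)\<rfloor> - \<lfloor>c * of_int n\<rfloor>"
    and "\<And>n. g n = \<lfloor>d * (of_int n + 1)\<rfloor> - \<lfloor>d * of_int n\<rfloor>"
    and "t \<ge> 0"
  shows "(\<Sum>n\<in>{1..\<lfloor>t\<rfloor>}. f n * g (\<lfloor>c * of_int n\<rfloor> + 1))
         = \<lfloor>d * (of_int \<lfloor>c * (of_int \<lfloor>t\<rfloor> + 1)\<rfloor> + 1)\<rfloor>"
proof -
  define h where "h n = \<lfloor>c * of_int n\<rfloor>" for n :: int
  define F where "F m = \<lfloor>d * (of_int m + 1)\<rfloor>" for m :: int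
  have summand: "f n * g (h n + 1) = F (h (n + 1)) - F (h n)" for n
  proof -
    have "h (n + 1) = h n \<or> h (n + 1) = h n + 1"
      using floor_mult_add_one_cases[of c "of_int n"] assms(1,2) by (simp add: h_def)
    moreover have "f n = h (n + 1) - h n" "g (h n + 1) = F (h n + 1) - F (h n)"
      by (simp_all add: assms(7,8) h_def F_def add_ac)
    ultimately show ?thesis by (simp add: unit_step_mult_diff)
  qed
  have "h 1 = 0" "F 0 = 0"
    using assms(1-4) by (simp_all add: h_def F_def floor_eq_iff)
  moreover have "(\<Sum>n\<in>{1..\<lfloor>t\<rfloor>}. f n * g (h n + 1)) = F (h (\<lfloor>t\<rfloor> + 1)) - F (h 1)"
    using sum_int_atLeastAtMost_telescope[of "\<lfloor>t\<rfloor>" "\<lambda>n. F (h n)"] assms(9)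
    by (simp add: summand)
  ultimately show ?thesis by (simp add: h_def F_def)
qed

end
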